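(* Fix a filtration $\{Q(C;\alpha)\}$ of simplicial complexes on a finite cloud $C$ in a metric space. For every $\alpha>0$, the reduced skeleton $\mathrm{HoPeS}(C;\alpha)$ has the minimum total length of edges over all graphs $G\subseteq Q(C;\alpha)$ that span $Q(C;\alpha)$ and for which the inclusion induces an isomorphism $H_1(G;\mathbb{Z}_2)\to H_1(Q(C;\alpha);\mathbb{Z}_2)$ (and $\mathrm{HoPeS}(C;\alpha)$ itself is such a graph).
   Context: A filtration on a finite set $C$: nested finite simplicial complexes $Q(C;\alpha)$, $\alpha\ge0$, with vertex set $C$, $Q(C;0)=C$, each simplex entering at a minimal scale; final complex connected. Edge length $|e|=2\min\{\alpha:e\subset Q(C;\alpha)\}$. $\mathrm{MST}(C)$ is a minimum total length spanning tree on $C$ using filtration edges; $\mathrm{MST}(C;\alpha)$ removes all open edges of length $>2\alpha$. A graph $G$ spans a complex $Q$ on $C$ if $G$ has vertex set $C$, every edge of $G$ is in $Q$, and the inclusion induces a bijection on connected components. Homology with $\mathbb{Z}_2$ coefficients. An edge is critical if its addition creates a new class in $H_1$ that does not immediately die; its birth is its entry scale. Deaths of critical edges: at scale $\alpha$, let $K_1,\dots,K_s$ be the critical edges with birth $\le\alpha$ not yet assigned a death; $[K_1],\dots,[K_s]$ form a basis of $H_1((\mathrm{MST}(C;\alpha)\cup\bigcup K_j)/\mathrm{MST}(C;\alpha))$; let $f$ be the map into $H_1(Q(C;\alpha)/\mathrm{MST}(C;\alpha))$ induced by inclusion; take a basis $b_1,\dots,b_r$ of $\ker f$, $b_i=\sum_jc_{ij}[K_j]$,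 and solve $\sum_jc_{ij}x_j=0$ over $\mathbb{Z}_2$ with $r$ leading variables chosen by the elder rule (the leading set whose critical edges have greatest combined birth; any choice among ties); each $K_i$ with $i$ leading gets death $\alpha$. $\mathrm{HoPeS}(C)$ is the union of $\mathrm{MST}(C)$ and all critical edges labelled by (birth, death). The reduced skeleton $\mathrm{HoPeS}(C;\alpha)$ is obtained from $\mathrm{HoPeS}(C)$ by removing all edges of length $>2\alpha$ and all critical edges with death $\le\alpha$. *)

theory Defs
  imports Complex_Main
begin

text \<open>A Z2-chain is a set of simplices
  (addition = symmetric difference).\<close>

definition faces1 :: "'a set \<Rightarrow> 'a set set" where
  "faces1 \<sigma> = (\<lambda>v. \<sigma> - {v}) ` \<sigma>"

definition bd :: "'a set set \<Rightarrow> 'a set set" where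
  "bd c = {\<tau>. odd (card {\<sigma>\<in>c. \<tau> \<in> faces1 \<sigma>})}"

definition edges_of :: "'a set set \<Rightarrow> 'a set set" where
  "edges_of K = {\<sigma>\<in>K. card \<sigma> = 2}"

definition tris_of :: "'a set set \<Rightarrow> 'a set set" where
  "tris_of K = {\<sigma>\<in>K. card \<sigma> = 3}"

definition conn :: "'a set set \<Rightarrow> 'a \<Rightarrow> 'a \<Rightarrow> bool" where
  "conn E u v \<longleftrightarrow> (u, v) \<in> {(x, y). {x, y} \<in> E}\<^sup>*"

text \<open>A filtration on the finite set C is given by the finite simplicial complex S
  (the final complex) and the entry scale ent of each simplex;
  Q(C;alpha) = {sigma in S. ent sigma <= alpha}.\<close>

definition filtration :: "'a set \<Rightarrow> 'a set set \<Rightarrow> ('a set \<Rightarrow> real) \<Rightarrow> bool" where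
  "filtration C S ent \<longleftrightarrow>
     finite C \<and>
     (\<forall>\<sigma>\<in>S. \<sigma> \<noteq> {} \<and> finite \<sigma> \<and> \<sigma> \<subseteq> C) \<and>
     (\<forall>\<sigma>\<in>S. \<forall>\<tau>. \<tau> \<subseteq> \<sigma> \<and> \<tau> \<noteq> {} \<longrightarrow> \<tau> \<in> S) \<and>
     (\<forall>v\<in>C. {v} \<in> S \<and> ent {v} = 0) \<and>
     (\<forall>\<sigma>\<in>S. card \<sigma> \<ge> 2 \<longrightarrow> ent \<sigma> > 0) \<and>
     (\<forall>\<sigma>\<in>S. \<forall>\<tau>. \<tau> \<subseteq> \<sigma> \<and> \<tau> \<noteq> {} \<longrightarrow> ent \<tau> \<le> ent \<sigma>) \<and>
     (\<forall>u\<in>C. \<forall>v\<in>C. conn (edges_of S) u v)"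

definition Qf :: "'a set set \<Rightarrow> ('a set \<Rightarrow> real) \<Rightarrow> real \<Rightarrow> 'a set set" where
  "Qf S ent \<alpha> = {\<sigma>\<in>S. ent \<sigma> \<le> \<alpha>}"

text \<open>Edge length |e| = 2 * (entry scale of e); total length of a graph.\<close>
definition total_len :: "('a set \<Rightarrow> real) \<Rightarrow> 'a set set \<Rightarrow> real" where
  "total_len ent E = (\<Sum>e\<in>E. 2 * ent e)"

definition spanning_tree :: "'a set \<Rightarrow> 'a set set \<Rightarrow> 'a set set \<Rightarrow> bool" where
  "spanning_tree C S T \<longleftrightarrow>
     T \<subseteq> edges_of S \<and>
     (\<forall>u\<in>C. \<forall>v\<in>C. conn T u v) \<and>
     (\<forall>e\<in>T. \<forall>u v. e = {u, v} \<longrightarrow> \<not> conn (T - {e}) u v)"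

definition is_MST :: "'a set \<Rightarrow> 'a set set \<Rightarrow> ('a set \<Rightarrow> real) \<Rightarrow> 'a set set \<Rightarrow> bool" where
  "is_MST C S ent T \<longleftrightarrow> spanning_tree C S T \<and>
     (\<forall>T'. spanning_tree C S T' \<longrightarrow> total_len ent T \<le> total_len ent T')"

text \<open>MST(C;alpha): MST edges of length at most 2 alpha (vertex set C is implicit).\<close>
definition MST_at :: "('a set \<Rightarrow> real) \<Rightarrow> 'a set set \<Rightarrow> real \<Rightarrow> 'a set set" where
  "MST_at ent T \<alpha> = {e\<in>T. ent e \<le> \<alpha>}"

text \<open>Candidate edges: filtration edges not in the MST. dth e = Some t means death t,
  None means death = infinity. Birth of e is ent e.\<close>

definition cand :: "'a set set \<Rightarrow> 'a set set \<Rightarrow> 'a set set" where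
  "cand S T = edges_of S - T"

definition unassigned ::
  "'a set set \<Rightarrow> ('a set \<Rightarrow> real) \<Rightarrow> 'a set set \<Rightarrow> ('a set \<Rightarrow> real option) \<Rightarrow> real \<Rightarrow> 'a set set" where
  "unassigned S ent T dth \<alpha> =
     {e\<in>cand S T. ent e \<le> \<alpha> \<and> (\<forall>t. dth e = Some t \<longrightarrow> \<alpha> \<le> t)}"

text \<open>The kernel of f: subsets A of the unassigned edges (i.e. Z2 combinations) whose
  class in H1(Q(C;alpha)/MST(C;alpha)) vanishes: A = boundary of a 2-chain of Q(C;alpha)
  plus a 1-chain of MST(C;alpha).\<close>
definition kerf ::
  "'a set set \<Rightarrow> ('a set \<Rightarrow> real) \<Rightarrow> 'a set set \<Rightarrow> ('a set \<Rightarrow> real option) \<Rightarrow> real \<Rightarrow> 'a set set set" where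
  "kerf S ent T dth \<alpha> =
     {A. A \<subseteq> unassigned S ent T dth \<alpha> \<and>
         (\<exists>d. d \<subseteq> tris_of (Qf S ent \<alpha>) \<and> (A - bd d) \<union> (bd d - A) \<subseteq> MST_at ent T \<alpha>)}"

text \<open>A set L of r = dim ker f leading variables: the coordinate projection of ker f
  onto L is a bijection, i.e. the columns L of the coefficient matrix form an
  invertible r x r submatrix.\<close>
definition leading ::
  "'a set set \<Rightarrow> ('a set \<Rightarrow> real) \<Rightarrow> 'a set set \<Rightarrow> ('a set \<Rightarrow> real option) \<Rightarrow> real \<Rightarrow> 'a set set \<Rightarrow> bool" where
  "leading S ent T dth \<alpha> L \<longleftrightarrow>
     L \<subseteq> unassigned S ent T dth \<alpha> \<and>
     bij_betw (\<lambda>A. A \<inter> L) (kerf S ent T dth \<alpha>) (Pow L)"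

definition valid_deaths ::
  "'a set set \<Rightarrow> ('a set \<Rightarrow> real) \<Rightarrow> 'a set set \<Rightarrow> ('a set \<Rightarrow> real option) \<Rightarrow> bool" where
  "valid_deaths S ent T dth \<longleftrightarrow>
     (\<forall>e. e \<notin> cand S T \<longrightarrow> dth e = None) \<and>
     (\<forall>\<alpha>. let D = {e\<in>cand S T. dth e = Some \<alpha>} in
        D \<subseteq> unassigned S ent T dth \<alpha> \<and>
        leading S ent T dth \<alpha> D \<and>
        (\<forall>L. leading S ent T dth \<alpha> L \<longrightarrow> (\<Sum>e\<in>L. ent e) \<le> (\<Sum>e\<in>D. ent e)))"

definition critical ::
  "'a set set \<Rightarrow> ('a set \<Rightarrow> real) \<Rightarrow> 'a set set \<Rightarrow> ('a set \<Rightarrow> real option) \<Rightarrow> 'a set \<Rightarrow> bool" where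
  "critical S ent T dth e \<longleftrightarrow> e \<in> cand S T \<and> (\<forall>t. dth e = Some t \<longrightarrow> ent e < t)"

definition HoPeS ::
  "'a set set \<Rightarrow> ('a set \<Rightarrow> real) \<Rightarrow> 'a set set \<Rightarrow> ('a set \<Rightarrow> real option) \<Rightarrow> 'a set set" where
  "HoPeS S ent T dth = T \<union> {e. critical S ent T dth e}"

definition HoPeS_at ::
  "'a set set \<Rightarrow> ('a set \<Rightarrow> real) \<Rightarrow> 'a set set \<Rightarrow> ('a set \<Rightarrow> real option) \<Rightarrow> real \<Rightarrow> 'a set set" where
  "HoPeS_at S ent T dth \<alpha> =
     {e\<in>HoPeS S ent T dth. ent e \<le> \<alpha> \<and>
        \<not> (critical S ent T dth e \<and> (\<exists>t. dth e = Some t \<and> t \<le> \<alpha>))}"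

text \<open>A graph with vertex set C, given by its edge set G, spans the complex K on C if its
  edges lie in K and inclusion is a bijection on components (surjectivity is automatic
  since the vertex sets agree).\<close>
definition spans :: "'a set \<Rightarrow> 'a set set \<Rightarrow> 'a set set \<Rightarrow> bool" where
  "spans C G K \<longleftrightarrow> G \<subseteq> edges_of K \<and>
     (\<forall>u\<in>C. \<forall>v\<in>C. conn (edges_of K) u v \<longrightarrow> conn G u v)"

text \<open>Inclusion of the graph G into K induces an isomorphism H1(G;Z2) -> H1(K;Z2).
  G has no 2-simplices, so H1(G) = Z1(G).\<close>
definition H1_iso :: "'a set set \<Rightarrow> 'a set set \<Rightarrow> bool" where
  "H1_iso G K \<longleftrightarrow>
     (\<forall>z. z \<subseteq> G \<and> bd z = {} \<and> (\<exists>d. d \<subseteq> tris_of K \<and> bd d = z) \<longrightarrow> z = {}) \<and>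
     (\<forall>z. z \<subseteq> edges_of K \<and> bd z = {} \<longrightarrow>
        (\<exists>c. c \<subseteq> G \<and> bd c = {} \<and>
           (\<exists>d. d \<subseteq> tris_of K \<and> bd d = (z - c) \<union> (c - z))))"

end

theory Submission
  imports Defs
begin

text \<open>Modulo boundaries of 2-chains, the edges of Q(C;alpha) span a Z2-vector space. A graph G
  spanning Q(C;alpha) with H1(G) = H1(Q(C;alpha)) is a basis of it: injectivity is independence,
  and surjectivity together with connectivity puts every edge into the span of G.

  The reduced skeleton is a basis, and a greedy one: every edge e is homologous to a sum of
  skeleton edges no longer than e. For an edge that died at a scale t \<le> alpha, take the kernel
  element in which it is the only leading edge; by the elder rule it contains no edge younger
  than e, its MST part is, by the cycle property of minimum spanning trees, the tree path of
  edges no longer than e, and its remaining edges died later and are handled by induction.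
  Independence holds because a boundary made of skeleton edges would be a kernel element
  without leading edges. Finally a greedy basis has minimum total length, since below every
  threshold it has at least as many edges as any other basis.\<close>

section \<open>Z2-chains\<close>

lemma odd_card_sym_diff:
  assumes "finite A" "finite B"
  shows "odd (card (sym_diff A B)) \<longleftrightarrow> odd (card A) \<noteq> odd (card B)"
proof -
  have sub: "A \<inter> B \<subseteq> A \<union> B" and eq: "sym_diff A B = (A \<union> B) - (A \<inter> B)" by blast+
  have "card (sym_diff A B) + 2 * card (A \<inter> B) = card A + card B"
  proof -
    have fin: "finite (A \<inter> B)" "finite (A \<union> B)" using assms by auto
    show ?thesis
      using card_Un_Int[OF assms] card_Diff_subset[OF fin(1) sub] card_mono[OF fin(2) sub]
      unfolding eq by linarith
  qed
  then show ?thesis by (metis even_add even_mult_iff even_numeral)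
qed

lemma bd_sym_diff:
  assumes "finite X" "finite Y"
  shows "bd (sym_diff X Y) = sym_diff (bd X) (bd Y)"
proof -
  have "odd (card {\<sigma>\<in>sym_diff X Y. \<tau> \<in> faces1 \<sigma>}) \<longleftrightarrow>
        odd (card {\<sigma>\<in>X. \<tau> \<in> faces1 \<sigma>}) \<noteq> odd (card {\<sigma>\<in>Y. \<tau> \<in> faces1 \<sigma>})" for \<tau>
  proof -
    have "{\<sigma>\<in>sym_diff X Y. \<tau> \<in> faces1 \<sigma>} =
          sym_diff {\<sigma>\<in>X. \<tau> \<in> faces1 \<sigma>} {\<sigma>\<in>Y. \<tau> \<in> faces1 \<sigma>}" by blast
    then show ?thesis by (simp only:) (rule odd_card_sym_diff; use assms in simp)
  qed
  then show ?thesis unfolding bd_def by blast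
qed

lemma bd_insert:
  "finite X \<Longrightarrow> \<sigma> \<notin> X \<Longrightarrow> bd (insert \<sigma> X) = sym_diff (bd {\<sigma>}) (bd X)"
proof -
  assume "finite X" "\<sigma> \<notin> X"
  then have "insert \<sigma> X = sym_diff {\<sigma>} X" "finite {\<sigma>}" by auto
  with \<open>finite X\<close> show ?thesis by (metis bd_sym_diff)
qed

lemma bd_remove:
  assumes "finite X" "\<sigma> \<in> X"
  shows "bd (X - {\<sigma>}) = sym_diff (bd {\<sigma>}) (bd X)"
proof -
  have "X = sym_diff {\<sigma>} (X - {\<sigma>})"
    using assms(2) by blast
  moreover have "bd (sym_diff {\<sigma>} (X - {\<sigma>})) = sym_diff (bd {\<sigma>}) (bd (X - {\<sigma>}))"
    using assms(1) by (intro bd_sym_diff) auto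
  ultimately have "bd X = sym_diff (bd {\<sigma>}) (bd (X - {\<sigma>}))"
    by simp
  then show ?thesis
    by blast
qed

lemma bd_empty [simp]: "bd {} = {}"
  by (simp add: bd_def)

lemma bd_singleton: "bd {\<sigma>} = faces1 \<sigma>"
proof -
  have "{\<rho>\<in>{\<sigma>}. \<tau> \<in> faces1 \<rho>} = (if \<tau> \<in> faces1 \<sigma> then {\<sigma>} else {})" for \<tau> by auto
  then show ?thesis unfolding bd_def by auto
qed

lemma bd_edge: "u \<noteq> v \<Longrightarrow> bd {{u, v}} = {{u}, {v}}"
  unfolding bd_singleton faces1_def by auto

lemma finite_bd:
  assumes "finite X" "\<forall>\<sigma>\<in>X. finite \<sigma>"
  shows "finite (bd X)"
proof (rule finite_subset)
  show "bd X \<subseteq> \<Union> (faces1 ` X)"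
    unfolding bd_def by (auto dest!: odd_card_imp_not_empty)
  show "finite (\<Union> (faces1 ` X))"
    using assms unfolding faces1_def by auto
qed

lemma bd_bd_triangle:
  assumes "card t = 3"
  shows "bd (bd {t}) = {}"
proof -
  obtain a b c where t: "t = {a, b, c}" "a \<noteq> b" "b \<noteq> c" "a \<noteq> c"
    using assms unfolding card_3_iff by blast
  have "bd {t} = {{b, c}, {a, c}, {a, b}}"
    using t unfolding bd_singleton faces1_def by auto
  also have "\<dots> = sym_diff {{b, c}} (sym_diff {{a, c}} {{a, b}})"
    using t by (auto simp: doubleton_eq_iff)
  finally have "bd (bd {t}) = sym_diff (bd {{b, c}}) (sym_diff (bd {{a, c}}) (bd {{a, b}}))"
    using bd_sym_diff[of "{{a, c}}" "{{a, b}}"] bd_sym_diff[of "{{b, c}}"] by simp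
  also have "\<dots> = {}"
    using t by (simp add: bd_edge)
  finally show ?thesis .
qed

lemma bd_bd:
  assumes "finite X" "\<forall>\<sigma>\<in>X. card \<sigma> = 3"
  shows "bd (bd X) = {}"
  using assms
proof (induction X rule: finite_induct)
  case (insert t X)
  have "\<forall>\<sigma>\<in>insert t X. finite \<sigma>"
    using insert.prems by (auto intro: card_ge_0_finite)
  then have "finite (bd {t})" "finite (bd X)"
    using insert.hyps by (auto intro!: finite_bd)
  moreover have "bd (insert t X) = sym_diff (bd {t}) (bd X)"
    using insert.hyps by (rule bd_insert)
  ultimately have "bd (bd (insert t X)) = sym_diff (bd (bd {t})) (bd (bd X))"
    by (simp only: bd_sym_diff)
  then show ?case
    using insert bd_bd_triangle[of t] by simp
qed simp

section \<open>Connectivity in graphs\<close>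

lemma conn_refl: "conn E u u"
  unfolding conn_def by simp

lemma conn_trans: "conn E u v \<Longrightarrow> conn E v w \<Longrightarrow> conn E u w"
  unfolding conn_def by (rule rtrancl_trans)

lemma conn_edge: "{u, v} \<in> E \<Longrightarrow> conn E u v"
  unfolding conn_def by auto

lemma conn_transfer:
  assumes "\<And>x y. {x, y} \<in> E \<Longrightarrow> conn E' x y" "conn E u v"
  shows "conn E' u v"
  using assms(2) unfolding conn_def[of E]
proof (induction rule: rtrancl_induct)
  case (step y z)
  then have "conn E' y z" using assms(1) by simp
  then show ?case by (rule conn_trans[OF step.IH])
qed (rule conn_refl)

lemma conn_mono: "E \<subseteq> E' \<Longrightarrow> conn E u v \<Longrightarrow> conn E' u v"
  by (erule conn_transfer[rotated]) (auto intro: conn_edge)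

lemma card_Int_component_neq_1:
  assumes "\<sigma> \<in> E" "card \<sigma> = 2"
  shows "card (\<sigma> \<inter> {w. conn E x w}) \<noteq> 1"
proof -
  obtain a b where ab: "\<sigma> = {a, b}" "a \<noteq> b"
    using assms(2) by (meson card_2_iff)
  have "{a, b} \<in> E" "{b, a} \<in> E"
    using assms(1) ab(1) insert_commute[of b a "{}"] by simp_all
  then have "conn E a b" "conn E b a"
    by (simp_all add: conn_edge)
  then have "conn E x a \<longleftrightarrow> conn E x b"
    by (meson conn_trans)
  then have "\<sigma> \<inter> {w. conn E x w} = \<sigma> \<or> \<sigma> \<inter> {w. conn E x w} = {}"
    using ab(1) by blast
  then show ?thesis
    using assms(2) by fastforce
qed

text \<open>card (\<sigma> \<inter> W) = 1 says that the edge \<sigma> crosses the cut (W, -W).\<close>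
lemma odd_card_cut_edges_iff:
  assumes "finite z" "\<forall>\<sigma>\<in>z. card \<sigma> = 2"
  shows "odd (card {\<sigma>\<in>z. card (\<sigma> \<inter> W) = 1}) \<longleftrightarrow> odd (card {w\<in>W. {w} \<in> bd z})"
  using assms
proof (induction z rule: finite_induct)
  case (insert \<sigma> z)
  then obtain u v where uv: "\<sigma> = {u, v}" "u \<noteq> v"
    by (meson card_2_iff insertI1)
  have "finite (bd z)"
    using insert by (intro finite_bd) (auto intro: card_ge_0_finite)
  then have "finite ((\<lambda>w. {w}) -` bd z)"
    by (rule finite_vimageI) (simp add: inj_on_def)
  then have fin: "finite {w\<in>W. {w} \<in> bd z}"
    by (rule finite_subset[rotated]) auto
  have "bd (insert \<sigma> z) = sym_diff {{u}, {v}} (bd z)"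
    using bd_insert[OF insert.hyps] bd_edge[OF uv(2)] uv(1) by simp
  then have "{w\<in>W. {w} \<in> bd (insert \<sigma> z)} = sym_diff (\<sigma> \<inter> W) {w\<in>W. {w} \<in> bd z}"
    using uv by auto
  then have bd_parity: "odd (card {w\<in>W. {w} \<in> bd (insert \<sigma> z)}) \<longleftrightarrow>
      odd (card (\<sigma> \<inter> W)) \<noteq> odd (card {w\<in>W. {w} \<in> bd z})"
    using fin odd_card_sym_diff[of "\<sigma> \<inter> W"] uv(1) by simp
  have \<sigma>_parity: "odd (card (\<sigma> \<inter> W)) \<longleftrightarrow> card (\<sigma> \<inter> W) = 1"
    using uv by (cases "u \<in> W"; cases "v \<in> W") auto
  have "{\<rho>\<in>insert \<sigma> z. card (\<rho> \<inter> W) = 1} =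
      (if card (\<sigma> \<inter> W) = 1 then insert \<sigma> {\<rho>\<in>z. card (\<rho> \<inter> W) = 1}
       else {\<rho>\<in>z. card (\<rho> \<inter> W) = 1})"
    by auto
  moreover have "card (insert \<sigma> {\<rho>\<in>z. card (\<rho> \<inter> W) = 1}) = Suc (card {\<rho>\<in>z. card (\<rho> \<inter> W) = 1})"
    using insert.hyps by (intro card_insert_disjoint) auto
  ultimately have "card {\<rho>\<in>insert \<sigma> z. card (\<rho> \<inter> W) = 1} =
      (if card (\<sigma> \<inter> W) = 1 then Suc (card {\<rho>\<in>z. card (\<rho> \<inter> W) = 1})
       else card {\<rho>\<in>z. card (\<rho> \<inter> W) = 1})"
    by (cases "card (\<sigma> \<inter> W) = 1") (simp_all only: simp_thms if_True if_False)
  moreover have "odd (card {\<rho>\<in>z. card (\<rho> \<inter> W) = 1}) \<longleftrightarrow> odd (card {w\<in>W. {w} \<in> bd z})"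
    using insert.IH insert.prems by simp
  ultimately show ?case
    using bd_parity \<sigma>_parity by (cases "card (\<sigma> \<inter> W) = 1") simp_all
qed simp

text \<open>The boundary of a path from u to v; it is empty when u = v.\<close>
definition ends :: "'a \<Rightarrow> 'a \<Rightarrow> 'a set set" where
  "ends u v = (if u = v then {} else {{u}, {v}})"

lemma conn_imp_chain:
  assumes "conn E u v" "\<forall>\<sigma>\<in>E. card \<sigma> = 2"
  shows "\<exists>p\<subseteq>E. finite p \<and> bd p = ends u v"
  using assms(1) unfolding conn_def
proof (induction rule: rtrancl_induct)
  case base
  show ?case by (intro exI[of _ "{}"]) (simp add: ends_def)
next
  case (step x y)
  then obtain p where p: "p \<subseteq> E" "finite p" "bd p = ends u x" by blast
  have xy: "{x, y} \<in> E"
    using step by simp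
  then have "x \<noteq> y"
    using assms(2) by fastforce
  have "bd (sym_diff p {{x, y}}) = sym_diff (bd p) (bd {{x, y}})"
    using p by (intro bd_sym_diff) auto
  also have "\<dots> = ends u y"
    using \<open>x \<noteq> y\<close> p(3) by (auto simp: bd_edge ends_def)
  finally show ?case
    using p xy by (intro exI[of _ "sym_diff p {{x, y}}"]) auto
qed

lemma chain_imp_conn:
  assumes "p \<subseteq> E" "finite p" "\<forall>\<sigma>\<in>E. card \<sigma> = 2" "bd p = {{x}, {y}}" "x \<noteq> y"
  shows "conn E x y"
proof (rule ccontr)
  define W where "W = {w. conn E x w}"
  assume "\<not> conn E x y"
  then have boundary_in_W: "{w\<in>W. {w} \<in> bd p} = {x}"
    using assms(4,5) conn_refl[of E x] unfolding W_def by auto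
  have no_crossing: "{\<sigma>\<in>p. card (\<sigma> \<inter> W) = 1} = {}"
    using assms(1,3) card_Int_component_neq_1[of _ E x] unfolding W_def by blast
  have "odd (card {\<sigma>\<in>p. card (\<sigma> \<inter> W) = 1}) \<longleftrightarrow> odd (card {w\<in>W. {w} \<in> bd p})"
    using assms(1-3) by (intro odd_card_cut_edges_iff) auto
  then show False
    unfolding boundary_in_W no_crossing by simp
qed

section \<open>Spanning trees and the cycle property\<close>

definition cycle_free :: "'a set set \<Rightarrow> bool" where
  "cycle_free E \<longleftrightarrow> (\<forall>z\<subseteq>E. bd z = {} \<longrightarrow> z = {})"

lemma edges_of_card: "\<sigma> \<in> edges_of K \<Longrightarrow> card \<sigma> = 2"
  unfolding edges_of_def by simp

lemma spanning_tree_edges: "spanning_tree C S T \<Longrightarrow> T \<subseteq> edges_of S"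
  unfolding spanning_tree_def by simp

lemma spanning_tree_conn: "spanning_tree C S T \<Longrightarrow> u \<in> C \<Longrightarrow> v \<in> C \<Longrightarrow> conn T u v"
  unfolding spanning_tree_def by simp

lemma spanning_tree_cycle_free:
  assumes T: "spanning_tree C S T" "finite T"
  shows "cycle_free T"
  unfolding cycle_free_def
proof (intro allI impI, rule ccontr)
  fix z assume z: "z \<subseteq> T" "bd z = {}" "z \<noteq> {}"
  then obtain e where e: "e \<in> z" by blast
  have T2: "\<forall>\<sigma>\<in>T. card \<sigma> = 2"
    using spanning_tree_edges[OF T(1)] edges_of_card by blast
  then obtain u v where uv: "e = {u, v}" "u \<noteq> v"
    using e z(1) by (meson card_2_iff subsetD)
  define W where "W = {w. conn (T - {e}) u w}"
  have "\<not> conn (T - {e}) u v"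
    using T(1) e z(1) uv(1) unfolding spanning_tree_def by blast
  then have "e \<inter> W = {u}"
    using uv conn_refl[of _ u] unfolding W_def by auto
  moreover have "card (\<sigma> \<inter> W) \<noteq> 1" if "\<sigma> \<in> z" "\<sigma> \<noteq> e" for \<sigma>
    using card_Int_component_neq_1[of \<sigma> "T - {e}" u] that z(1) T2 unfolding W_def by auto
  ultimately have crossing: "{\<sigma>\<in>z. card (\<sigma> \<inter> W) = 1} = {e}"
    using e by auto
  have "odd (card {\<sigma>\<in>z. card (\<sigma> \<inter> W) = 1}) \<longleftrightarrow> odd (card {w\<in>W. {w} \<in> bd z})"
    using z(1) T(2) T2 by (intro odd_card_cut_edges_iff) (auto intro: finite_subset)
  then show False
    unfolding crossing z(2) by simp
qed

lemma spanning_treeI: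
  assumes "T \<subseteq> edges_of S" "finite T" "\<forall>u\<in>C. \<forall>v\<in>C. conn T u v" "cycle_free T"
  shows "spanning_tree C S T"
  unfolding spanning_tree_def
proof (intro conjI ballI allI impI notI)
  fix e u v assume e: "e \<in> T" "e = {u, v}" and c: "conn (T - {e}) u v"
  have "u \<noteq> v"
    using assms(1) e edges_of_card by fastforce
  obtain p where p: "p \<subseteq> T - {e}" "finite p" "bd p = ends u v"
    using conn_imp_chain[OF c] assms(1) edges_of_card by blast
  have "bd (insert e p) = sym_diff (bd {e}) (bd p)"
    using p by (intro bd_insert) auto
  also have "\<dots> = {}"
    using p(3) \<open>u \<noteq> v\<close> e(2) by (simp add: ends_def bd_edge)
  finally show False
    using assms(4) p e(1) unfolding cycle_free_def by blast
qed (use assms in auto)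

lemma spanning_tree_chain_unique:
  assumes "spanning_tree C S T" "finite T" "p \<subseteq> T" "q \<subseteq> T" "bd p = bd q"
  shows "p = q"
proof -
  have "finite p" "finite q"
    using assms(2-4) finite_subset by blast+
  then have "bd (sym_diff p q) = sym_diff (bd p) (bd q)"
    by (rule bd_sym_diff)
  then have "bd (sym_diff p q) = {}"
    using assms(5) by simp
  moreover have "sym_diff p q \<subseteq> T"
    using assms(3,4) by blast
  ultimately have "sym_diff p q = {}"
    using spanning_tree_cycle_free[OF assms(1,2)] unfolding cycle_free_def by blast
  then show ?thesis
    by blast
qed

lemma cycle_free_exchange:
  assumes T: "cycle_free T" "finite T" and p: "p \<subseteq> T" "bd p = bd {\<sigma>}"
    and \<sigma>: "\<sigma> \<notin> T" and f: "f \<in> p"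
  shows "cycle_free (insert \<sigma> (T - {f}))"
  unfolding cycle_free_def
proof (intro allI impI)
  fix z assume z: "z \<subseteq> insert \<sigma> (T - {f})" "bd z = {}"
  show "z = {}"
  proof (cases "\<sigma> \<in> z")
    case False
    then show ?thesis
      using z T(1) unfolding cycle_free_def by blast
  next
    case True
    define z' where "z' = sym_diff z (insert \<sigma> p)"
    have "finite (insert \<sigma> (T - {f}))" "finite p" "\<sigma> \<notin> p"
      using T(2) p(1) \<sigma> finite_subset by auto
    then have "finite z" "finite (insert \<sigma> p)"
      using z(1) finite_subset by blast+
    then have "bd z' = sym_diff (bd z) (bd (insert \<sigma> p))"
      unfolding z'_def by (rule bd_sym_diff)
    also have "bd (insert \<sigma> p) = sym_diff (bd {\<sigma>}) (bd p)"
      using \<open>finite p\<close> \<open>\<sigma> \<notin> p\<close> by (rule bd_insert)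
    finally have "bd z' = {}"
      using z(2) p(2) by simp
    moreover have "z' \<subseteq> T" "f \<in> z'"
      using z(1) True p(1) f \<sigma> unfolding z'_def by auto
    ultimately show ?thesis
      using T(1) unfolding cycle_free_def by blast
  qed
qed

lemma spanning_tree_exchange:
  assumes T: "spanning_tree C S T" "finite T"
    and \<sigma>: "\<sigma> \<in> edges_of S" "\<sigma> \<notin> T"
    and p: "p \<subseteq> T" "bd p = bd {\<sigma>}" and f: "f \<in> p"
  shows "spanning_tree C S (insert \<sigma> (T - {f}))"
proof -
  define T' where "T' = insert \<sigma> (T - {f})"
  have T_edges: "T \<subseteq> edges_of S"
    using T(1) by (rule spanning_tree_edges)
  then have T'_edges: "T' \<subseteq> edges_of S"
    using \<sigma>(1) unfolding T'_def by blast
  have fin: "finite p" "finite T'"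
    using p(1) T(2) finite_subset unfolding T'_def by auto
  have "\<sigma> \<notin> p"
    using p(1) \<sigma>(2) by auto
  have conn_f: "conn T' x y" if "f = {x, y}" for x y
  proof (rule chain_imp_conn)
    show "insert \<sigma> (p - {f}) \<subseteq> T'" "finite (insert \<sigma> (p - {f}))"
      using p(1) fin(1) unfolding T'_def by auto
    show "\<forall>\<sigma>\<in>T'. card \<sigma> = 2"
      using T'_edges edges_of_card by blast
    show "x \<noteq> y"
      using that f p(1) T_edges edges_of_card by fastforce
    have "bd (insert \<sigma> (p - {f})) = sym_diff (bd {\<sigma>}) (bd (p - {f}))"
      using fin(1) \<open>\<sigma> \<notin> p\<close> by (intro bd_insert) auto
    also have "\<dots> = sym_diff (bd {\<sigma>}) (sym_diff (bd {f}) (bd p))"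
      using fin(1) f by (simp only: bd_remove)
    also have "\<dots> = bd {f}"
      using p(2) by blast
    finally show "bd (insert \<sigma> (p - {f})) = {{x}, {y}}"
      using that \<open>x \<noteq> y\<close> by (simp add: bd_edge)
  qed
  have "conn T' x y" if "{x, y} \<in> T" for x y
    using that conn_f conn_edge[of x y T'] unfolding T'_def by blast
  then have connected: "\<forall>u\<in>C. \<forall>v\<in>C. conn T' u v"
    using spanning_tree_conn[OF T(1)] conn_transfer by metis
  have "cycle_free T'"
    unfolding T'_def using spanning_tree_cycle_free[OF T] T(2) p \<sigma>(2) f
    by (rule cycle_free_exchange)
  show ?thesis
    using spanning_treeI[OF T'_edges fin(2) connected \<open>cycle_free T'\<close>] unfolding T'_def .
qed

lemma filtration_finite: "filtration C S ent \<Longrightarrow> finite S"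
  unfolding filtration_def by (metis PowI finite_Pow_iff rev_finite_subset subsetI)

lemma filtration_simplex_subset: "filtration C S ent \<Longrightarrow> \<sigma> \<in> S \<Longrightarrow> \<sigma> \<subseteq> C"
  unfolding filtration_def by simp

lemma filtration_ent_pos: "filtration C S ent \<Longrightarrow> \<sigma> \<in> edges_of S \<Longrightarrow> 0 < ent \<sigma>"
  unfolding filtration_def edges_of_def by simp

lemma total_len_exchange:
  assumes "finite T" "f \<in> T" "\<sigma> \<notin> T"
  shows "total_len ent (insert \<sigma> (T - {f})) = total_len ent T - 2 * ent f + 2 * ent \<sigma>"
proof -
  have "total_len ent (insert \<sigma> (T - {f})) = 2 * ent \<sigma> + total_len ent (T - {f})"
    using assms unfolding total_len_def by (simp add: sum.insert)
  also have "total_len ent (T - {f}) = total_len ent T - 2 * ent f"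
    using assms unfolding total_len_def by (simp add: sum_diff1)
  finally show ?thesis
    by simp
qed

lemma MST_spanning_tree:
  assumes "filtration C S ent" "is_MST C S ent T"
  shows "spanning_tree C S T" "finite T"
proof -
  show T: "spanning_tree C S T"
    using assms(2) unfolding is_MST_def by simp
  have "finite (edges_of S)"
    using filtration_finite[OF assms(1)] unfolding edges_of_def by simp
  then show "finite T"
    using spanning_tree_edges[OF T] by (rule finite_subset[rotated])
qed

text \<open>The cycle property: otherwise the edge {a, b} could replace a longer edge of the tree
  path from a to b.\<close>
lemma MST_at_conn:
  assumes F: "filtration C S ent" and M: "is_MST C S ent T"
    and \<sigma>: "{a, b} \<in> edges_of S" "ent {a, b} \<le> \<beta>"
  shows "conn (MST_at ent T \<beta>) a b"
proof (rule ccontr)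
  assume not_conn: "\<not> conn (MST_at ent T \<beta>) a b"
  note T = MST_spanning_tree[OF F M]
  have T2: "\<forall>\<tau>\<in>T. card \<tau> = 2"
    using spanning_tree_edges[OF T(1)] edges_of_card by blast
  have "a \<noteq> b"
    using edges_of_card[OF \<sigma>(1)] by (cases "a = b") auto
  have "{a, b} \<subseteq> C"
    using \<sigma>(1) filtration_simplex_subset[OF F] unfolding edges_of_def by blast
  then have "conn T a b"
    using spanning_tree_conn[OF T(1)] by simp
  then obtain p where "p \<subseteq> T" "finite p" "bd p = ends a b"
    using conn_imp_chain[OF _ T2] by meson
  with \<open>a \<noteq> b\<close> have p: "p \<subseteq> T" "finite p" "bd p = {{a}, {b}}"
    unfolding ends_def by simp_all
  have "\<forall>\<tau>\<in>MST_at ent T \<beta>. card \<tau> = 2"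
    using T2 unfolding MST_at_def by blast
  then have "\<not> p \<subseteq> MST_at ent T \<beta>"
    using chain_imp_conn[of p _ a b] p(2,3) \<open>a \<noteq> b\<close> not_conn by blast
  then obtain f where f: "f \<in> p" "f \<notin> MST_at ent T \<beta>"
    by blast
  then have long_f: "\<beta> < ent f"
    using p(1) unfolding MST_at_def by auto
  have "{a, b} \<notin> T"
  proof
    assume "{a, b} \<in> T"
    then have "{a, b} \<in> MST_at ent T \<beta>"
      using \<sigma>(2) unfolding MST_at_def by simp
    then show False
      using not_conn conn_edge by metis
  qed
  moreover have "bd p = bd {{a, b}}"
    using p(3) \<open>a \<noteq> b\<close> by (simp add: bd_edge)
  ultimately have "spanning_tree C S (insert {a, b} (T - {f}))"
    using spanning_tree_exchange[OF T \<sigma>(1) _ p(1) _ f(1)] by blast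
  then have "total_len ent T \<le> total_len ent (insert {a, b} (T - {f}))"
    using M unfolding is_MST_def by blast
  moreover have "total_len ent (insert {a, b} (T - {f})) = total_len ent T - 2 * ent f + 2 * ent {a, b}"
    using T(2) f(1) p(1) \<open>{a, b} \<notin> T\<close> by (intro total_len_exchange) auto
  ultimately show False
    using long_f \<sigma>(2) by linarith
qed

section \<open>Chains modulo boundaries\<close>

text \<open>Span and independence in the Z2-vector space of 1-chains of K modulo the boundaries
  of its 2-chains.\<close>

definition boundaries :: "'a set set \<Rightarrow> 'a set set set" where
  "boundaries K = {bd d | d. d \<subseteq> tris_of K}"

definition hspan :: "'a set set \<Rightarrow> 'a set set \<Rightarrow> 'a set set set" where
  "hspan K X = {A. \<exists>Y\<subseteq>X. sym_diff A Y \<in> boundaries K}"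

definition hindep :: "'a set set \<Rightarrow> 'a set set \<Rightarrow> bool" where
  "hindep K X \<longleftrightarrow> (\<forall>Y\<subseteq>X. Y \<in> boundaries K \<longrightarrow> Y = {})"

lemma bd_bd_tris:
  assumes "finite K" "d \<subseteq> tris_of K"
  shows "bd (bd d) = {}"
proof (rule bd_bd)
  show "finite d"
    using assms finite_subset unfolding tris_of_def by fastforce
  show "\<forall>\<sigma>\<in>d. card \<sigma> = 3"
    using assms(2) unfolding tris_of_def by blast
qed

lemma finite_bd_tris:
  assumes "finite K" "d \<subseteq> tris_of K"
  shows "finite (bd d)"
proof (rule finite_bd)
  show "finite d"
    using assms finite_subset unfolding tris_of_def by fastforce
  show "\<forall>\<sigma>\<in>d. finite \<sigma>"
  proof
    fix \<sigma> assume "\<sigma> \<in> d"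
    then have "card \<sigma> = 3"
      using assms(2) unfolding tris_of_def by blast
    then show "finite \<sigma>"
      by (intro card_ge_0_finite) simp
  qed
qed

lemma empty_in_boundaries: "{} \<in> boundaries K"
  unfolding boundaries_def by (intro CollectI exI[of _ "{}"]) simp

lemma sym_diff_boundaries:
  assumes "finite K" "b \<in> boundaries K" "b' \<in> boundaries K"
  shows "sym_diff b b' \<in> boundaries K"
proof -
  obtain d d' where d: "b = bd d" "d \<subseteq> tris_of K" "b' = bd d'" "d' \<subseteq> tris_of K"
    using assms(2,3) unfolding boundaries_def by blast
  have "finite (tris_of K)"
    using assms(1) unfolding tris_of_def by simp
  then have "finite d" "finite d'"
    using d(2,4) finite_subset by blast+
  then have "sym_diff b b' = bd (sym_diff d d')"
    unfolding d(1,3) by (rule bd_sym_diff[symmetric])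
  moreover have "sym_diff d d' \<subseteq> tris_of K"
    using d by blast
  ultimately show ?thesis
    unfolding boundaries_def by blast
qed

lemma subset_hspan: "Y \<subseteq> X \<Longrightarrow> Y \<in> hspan K X"
  unfolding hspan_def using empty_in_boundaries by (intro CollectI exI[of _ Y]) simp

lemma hspan_mono: "X \<subseteq> X' \<Longrightarrow> A \<in> hspan K X \<Longrightarrow> A \<in> hspan K X'"
  unfolding hspan_def by blast

lemma hspan_sym_diff:
  assumes "finite K" "A \<in> hspan K X" "A' \<in> hspan K X"
  shows "sym_diff A A' \<in> hspan K X"
proof -
  obtain Y Y' where Y: "Y \<subseteq> X" "sym_diff A Y \<in> boundaries K"
    and Y': "Y' \<subseteq> X" "sym_diff A' Y' \<in> boundaries K"
    using assms(2,3) unfolding hspan_def by blast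
  have "sym_diff (sym_diff A A') (sym_diff Y Y') = sym_diff (sym_diff A Y) (sym_diff A' Y')"
    by blast
  then have "sym_diff (sym_diff A A') (sym_diff Y Y') \<in> boundaries K"
    using sym_diff_boundaries[OF assms(1) Y(2) Y'(2)] by simp
  moreover have "sym_diff Y Y' \<subseteq> X"
    using Y Y' by blast
  ultimately show ?thesis
    unfolding hspan_def by blast
qed

lemma hspan_if_singletons:
  assumes "finite K" "finite Y" "\<forall>y\<in>Y. {y} \<in> hspan K X"
  shows "Y \<in> hspan K X"
  using assms(2,3)
proof (induction Y rule: finite_induct)
  case empty
  show ?case by (rule subset_hspan) simp
next
  case (insert y Y)
  have "sym_diff {y} Y \<in> hspan K X"
    using insert by (intro hspan_sym_diff[OF assms(1)]) auto
  moreover have "sym_diff {y} Y = insert y Y"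
    using insert.hyps by blast
  ultimately show ?case
    by (simp only:)
qed

lemma hindep_mono: "hindep K X \<Longrightarrow> Y \<subseteq> X \<Longrightarrow> hindep K Y"
  unfolding hindep_def by blast

text \<open>Counting instead of Steinitz exchange: sending each subset of Y to a subset of X in the
  same class is injective, since Y is independent; hence 2^|Y| \<le> 2^|X|.\<close>
lemma card_le_if_hindep_hspan:
  assumes K: "finite K" and fin: "finite X" "finite Y" and indep: "hindep K Y"
    and span: "\<forall>y\<in>Y. {y} \<in> hspan K X"
  shows "card Y \<le> card X"
proof -
  have "Y' \<in> hspan K X" if "Y' \<subseteq> Y" for Y'
    using that span rev_finite_subset[OF fin(2) that] by (intro hspan_if_singletons[OF K]) auto
  then have "\<forall>Y'\<in>Pow Y. \<exists>Z. Z \<subseteq> X \<and> sym_diff Y' Z \<in> boundaries K"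
    unfolding hspan_def by blast
  then obtain g where g: "\<forall>Y'\<in>Pow Y. g Y' \<subseteq> X \<and> sym_diff Y' (g Y') \<in> boundaries K"
    by metis
  have "inj_on g (Pow Y)"
  proof (rule inj_onI)
    fix Y1 Y2 assume Y12: "Y1 \<in> Pow Y" "Y2 \<in> Pow Y" "g Y1 = g Y2"
    have "sym_diff Y1 Y2 = sym_diff (sym_diff Y1 (g Y1)) (sym_diff Y2 (g Y2))"
      using Y12(3) by blast
    then have "sym_diff Y1 Y2 \<in> boundaries K"
      using sym_diff_boundaries[OF K] g Y12(1,2) by metis
    moreover have "sym_diff Y1 Y2 \<subseteq> Y"
      using Y12 by blast
    ultimately have "sym_diff Y1 Y2 = {}"
      using indep unfolding hindep_def by blast
    then show "Y1 = Y2"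
      by blast
  qed
  moreover have "g ` Pow Y \<subseteq> Pow X"
    using g by blast
  ultimately have "card (Pow Y) \<le> card (Pow X)"
    using card_inj_on_le fin(1) by blast
  then show ?thesis
    using fin by (simp add: card_Pow)
qed

lemma hindep_if_H1_iso:
  assumes "finite K" "H1_iso G K"
  shows "hindep K G"
  unfolding hindep_def
proof (intro allI impI)
  fix Y assume Y: "Y \<subseteq> G" "Y \<in> boundaries K"
  then obtain d where d: "d \<subseteq> tris_of K" "bd d = Y"
    unfolding boundaries_def by blast
  then have "bd Y = {}"
    using bd_bd_tris[OF assms(1)] by blast
  then show "Y = {}"
    using assms(2) Y(1) d unfolding H1_iso_def by blast
qed

lemma H1_iso_if_hindep_hspan:
  assumes K: "finite K" and G: "G \<subseteq> edges_of K" "hindep K G"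
    and span: "\<forall>e\<in>edges_of K. {e} \<in> hspan K G"
  shows "H1_iso G K"
  unfolding H1_iso_def
proof (intro conjI allI impI)
  fix z assume "z \<subseteq> G \<and> bd z = {} \<and> (\<exists>d. d \<subseteq> tris_of K \<and> bd d = z)"
  then show "z = {}"
    using G(2) unfolding hindep_def boundaries_def by blast
next
  fix z assume z: "z \<subseteq> edges_of K \<and> bd z = {}"
  have "finite z"
    using z K finite_subset unfolding edges_of_def by fastforce
  then have "z \<in> hspan K G"
    using z span by (intro hspan_if_singletons[OF K]) auto
  then obtain c d where c: "c \<subseteq> G" "d \<subseteq> tris_of K" "sym_diff z c = bd d"
    unfolding hspan_def boundaries_def by blast
  then have "c = sym_diff z (bd d)"
    by blast
  then have "bd c = sym_diff (bd z) (bd (bd d))"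
    using bd_sym_diff[OF \<open>finite z\<close> finite_bd_tris[OF K c(2)]] by simp
  then have "bd c = {}"
    using z bd_bd_tris[OF K c(2)] by simp
  then show "\<exists>c. c \<subseteq> G \<and> bd c = {} \<and> (\<exists>d. d \<subseteq> tris_of K \<and> bd d = sym_diff z c)"
    using c by metis
qed

lemma H1_iso_surjD:
  assumes "H1_iso G K" "z \<subseteq> edges_of K" "bd z = {}"
  obtains c d where "c \<subseteq> G" "bd c = {}" "d \<subseteq> tris_of K" "bd d = sym_diff z c"
proof -
  have "\<forall>z. z \<subseteq> edges_of K \<and> bd z = {} \<longrightarrow>
      (\<exists>c. c \<subseteq> G \<and> bd c = {} \<and> (\<exists>d. d \<subseteq> tris_of K \<and> bd d = sym_diff z c))"
    using assms(1) unfolding H1_iso_def by (rule conjunct2)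
  then have "\<exists>c. c \<subseteq> G \<and> bd c = {} \<and> (\<exists>d. d \<subseteq> tris_of K \<and> bd d = sym_diff z c)"
    using assms(2,3) by simp
  then show ?thesis
    using that by blast
qed

lemma spans_conn: "spans C G K \<Longrightarrow> u \<in> C \<Longrightarrow> v \<in> C \<Longrightarrow> conn (edges_of K) u v \<Longrightarrow> conn G u v"
  unfolding spans_def by simp

text \<open>An edge e = {u, v} of K closes, with a path of G from u to v, a cycle of K; the H1
  isomorphism makes that cycle homologous to one in G.\<close>
lemma edge_in_hspan_if_H1_iso:
  assumes K: "finite K" "\<forall>\<sigma>\<in>K. \<sigma> \<subseteq> C" and G: "spans C G K" "H1_iso G K"
    and e: "e \<in> edges_of K"
  shows "{e} \<in> hspan K G"
proof -
  obtain u v where uv: "e = {u, v}" "u \<noteq> v"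
    using edges_of_card[OF e] by (meson card_2_iff)
  have "e \<subseteq> C"
    using e K(2) unfolding edges_of_def by blast
  then have "conn G u v"
    using uv(1) e conn_edge[of u v "edges_of K"] by (intro spans_conn[OF G(1)]) auto
  moreover have G_edges: "G \<subseteq> edges_of K"
    using G(1) unfolding spans_def by simp
  then have "\<forall>\<sigma>\<in>G. card \<sigma> = 2"
    using edges_of_card by blast
  ultimately obtain p where p: "p \<subseteq> G" "finite p" "bd p = ends u v"
    using conn_imp_chain by meson
  define z where "z = sym_diff p {e}"
  have "bd z = sym_diff (bd p) (bd {e})"
    unfolding z_def using p(2) by (intro bd_sym_diff) auto
  then have bd_z: "bd z = {}"
    using p(3) uv by (simp add: ends_def bd_edge)
  have "z \<subseteq> edges_of K"
    using p(1) G_edges e unfolding z_def by blast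
  then obtain c d where c: "c \<subseteq> G" "bd c = {}" "d \<subseteq> tris_of K" "bd d = sym_diff z c"
    using bd_z by (rule H1_iso_surjD[OF G(2)])
  then have "sym_diff {e} (sym_diff p c) = bd d"
    using c(4) unfolding z_def by auto
  then have "sym_diff {e} (sym_diff p c) \<in> boundaries K"
    using c(3) unfolding boundaries_def by blast
  moreover have "sym_diff p c \<subseteq> G"
    using p(1) c(1) by blast
  ultimately show ?thesis
    unfolding hspan_def by blast
qed

section \<open>Minimum-weight bases\<close>

lemma obtain_max_weight:
  fixes w :: "'b \<Rightarrow> real"
  assumes "finite A" "A \<noteq> {}"
  obtains a where "a \<in> A" "\<forall>x\<in>A. w x \<le> w a"
proof -
  obtain a where "a \<in> A" "Max (w ` A) = w a"
    using obtains_MAX[OF assms] by blast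
  moreover have "\<forall>x\<in>A. w x \<le> Max (w ` A)"
    using assms(1) by simp
  ultimately show ?thesis
    using that by simp
qed

lemma upper_counts_le_Diff:
  fixes w :: "'b \<Rightarrow> real"
  assumes fin: "finite B" "finite G"
    and counts: "\<forall>s. card {x\<in>B. s \<le> w x} \<le> card {x\<in>G. s \<le> w x}"
    and b: "b \<in> B" "\<forall>x\<in>B. w x \<le> w b" and g: "g \<in> G" "w b \<le> w g"
  shows "card {x\<in>B - {b}. s \<le> w x} \<le> card {x\<in>G - {g}. s \<le> w x}"
proof (cases "s \<le> w b")
  case True
  have "{x\<in>B - {b}. s \<le> w x} = {x\<in>B. s \<le> w x} - {b}"
    "{x\<in>G - {g}. s \<le> w x} = {x\<in>G. s \<le> w x} - {g}"
    by blast+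
  then show ?thesis
    using b(1) g True fin counts diff_le_mono[of _ _ 1] by (simp add: card_Diff_singleton)
next
  case False
  then have "{x\<in>B - {b}. s \<le> w x} = {}"
    using b(2) by force
  then show ?thesis
    by (simp only: card.empty le0)
qed

text \<open>Match a heaviest member of B with a member of G that is at least as heavy, and induct.\<close>
lemma sum_le_if_upper_counts_le:
  fixes w :: "'b \<Rightarrow> real"
  assumes "finite B" "finite G" "\<forall>x\<in>B \<union> G. 0 \<le> w x"
    and "\<forall>s. card {x\<in>B. s \<le> w x} \<le> card {x\<in>G. s \<le> w x}"
  shows "sum w B \<le> sum w G"
  using assms
proof (induction "card B" arbitrary: B G)
  case 0
  then show ?case by (simp add: sum_nonneg)
next
  case (Suc n)
  have "B \<noteq> {}"
    using Suc.hyps(2) by auto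
  then obtain b where b: "b \<in> B" "\<forall>x\<in>B. w x \<le> w b"
    using obtain_max_weight[of B w] Suc.prems(1) by blast
  have "card {x\<in>B. w b \<le> w x} \<noteq> 0"
    using b(1) Suc.prems(1) by auto
  then have "card {x\<in>G. w b \<le> w x} \<noteq> 0"
    using Suc.prems(4) by (metis le_zero_eq)
  then obtain g where g: "g \<in> G" "w b \<le> w g"
    by (metis (mono_tags, lifting) card.empty empty_Collect_eq)
  have "sum w (B - {b}) \<le> sum w (G - {g})"
  proof (rule Suc.hyps(1))
    show "n = card (B - {b})"
      using Suc.hyps(2) b(1) Suc.prems(1) by simp
    show "\<forall>s. card {x\<in>B - {b}. s \<le> w x} \<le> card {x\<in>G - {g}. s \<le> w x}"
      using upper_counts_le_Diff[OF Suc.prems(1,2,4) b g] by blast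
  qed (use Suc.prems in auto)
  moreover have "sum w B = w b + sum w (B - {b})" "sum w G = w g + sum w (G - {g})"
    using b(1) g(1) Suc.prems(1,2) by (simp_all add: sum.remove)
  ultimately show ?case
    using g(2) by simp
qed

text \<open>For every s, the members of G lighter than s are independent and lie in the span of the
  members of B lighter than s, so there are at most as many of them; with card B \<le> card G this
  bounds the number of members of weight at least s.\<close>
lemma greedy_basis_sum_le:
  fixes w :: "'a set \<Rightarrow> real"
  assumes K: "finite K" and fin: "finite B" "finite G"
    and indep: "hindep K B" "hindep K G"
    and B_span: "\<forall>b\<in>B. {b} \<in> hspan K G"
    and greedy: "\<forall>g\<in>G. {g} \<in> hspan K {b\<in>B. w b \<le> w g}"
    and nonneg: "\<forall>x\<in>B \<union> G. 0 \<le> w x"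
  shows "sum w B \<le> sum w G"
proof (rule sum_le_if_upper_counts_le[OF fin nonneg], rule allI)
  fix s
  have "card B \<le> card G"
    using card_le_if_hindep_hspan[OF K fin(2,1) indep(1) B_span] .
  moreover have "card {g\<in>G. w g < s} \<le> card {b\<in>B. w b < s}"
  proof (rule card_le_if_hindep_hspan[OF K])
    show "hindep K {g\<in>G. w g < s}"
      using indep(2) by (rule hindep_mono) blast
    show "\<forall>g\<in>{g\<in>G. w g < s}. {g} \<in> hspan K {b\<in>B. w b < s}"
    proof
      fix g assume g: "g \<in> {g\<in>G. w g < s}"
      then have "{b\<in>B. w b \<le> w g} \<subseteq> {b\<in>B. w b < s}"
        by auto
      then show "{g} \<in> hspan K {b\<in>B. w b < s}"
        using greedy g hspan_mono by blast
    qed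
  qed (use fin in auto)
  moreover have split: "card {x\<in>X. s \<le> w x} + card {x\<in>X. w x < s} = card X" if "finite X" for X
  proof -
    have "{x\<in>X. s \<le> w x} \<union> {x\<in>X. w x < s} = X" "{x\<in>X. s \<le> w x} \<inter> {x\<in>X. w x < s} = {}"
      by auto
    then show ?thesis
      using that card_Un_disjoint[of "{x\<in>X. s \<le> w x}" "{x\<in>X. w x < s}"] by simp
  qed
  ultimately show "card {x\<in>B. s \<le> w x} \<le> card {x\<in>G. s \<le> w x}"
    using split[OF fin(1)] split[OF fin(2)] by linarith
qed

section \<open>Leading variables and the elder rule\<close>

text \<open>Leading sets behave like bases of a Z2-subspace: if A is the kernel element whose leading
  part is the single variable e, then e may be exchanged for any other variable f of A.\<close>
lemma bij_betw_Int_exchange: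
  fixes \<K> :: "'b set set"
  assumes L: "finite L" and \<K>: "{} \<in> \<K>" "\<forall>X\<in>\<K>. \<forall>Y\<in>\<K>. sym_diff X Y \<in> \<K>"
    and bij: "bij_betw (\<lambda>X. X \<inter> L) \<K> (Pow L)"
    and A: "A \<in> \<K>" "A \<inter> L = {e}" "f \<in> A" "f \<notin> L"
  shows "bij_betw (\<lambda>X. X \<inter> insert f (L - {e})) \<K> (Pow (insert f (L - {e})))"
proof -
  define L' where "L' = insert f (L - {e})"
  have inj: "inj_on (\<lambda>X. X \<inter> L) \<K>"
    using bij by (rule bij_betw_imp_inj_on)
  have "inj_on (\<lambda>X. X \<inter> L') \<K>"
  proof (rule inj_onI)
    fix X Y assume XY: "X \<in> \<K>" "Y \<in> \<K>" "X \<inter> L' = Y \<inter> L'"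
    define Z where "Z = sym_diff X Y"
    have Z: "Z \<in> \<K>" "Z \<inter> L' = {}"
      using \<K>(2) XY unfolding Z_def by blast+
    have "Z = {}"
    proof (cases "e \<in> Z")
      case False
      then have "Z \<inter> L = {} \<inter> L"
        using Z(2) unfolding L'_def by auto
      then show ?thesis
        using inj_onD[OF inj _ Z(1) \<K>(1)] by simp
    next
      case True
      then have "Z \<inter> L = A \<inter> L"
        using Z(2) A(2) unfolding L'_def by auto
      then have "Z = A"
        using inj_onD[OF inj _ Z(1) A(1)] by simp
      then show ?thesis
        using Z(2) A(3) unfolding L'_def by auto
    qed
    then show "X = Y"
      unfolding Z_def by auto
  qed
  moreover have "e \<in> L"
    using A(2) by blast
  then have "card L' = Suc (card L - 1)" "0 < card L"
    using L A(4) unfolding L'_def by (auto simp: card_insert_if card_Diff_singleton card_gt_0_iff)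
  then have "card L' = card L"
    by simp
  ultimately have "card ((\<lambda>X. X \<inter> L') ` \<K>) = card (Pow L')"
    using card_image bij_betw_same_card[OF bij] L unfolding L'_def by (metis card_Pow finite_insert finite_Diff)
  then have "(\<lambda>X. X \<inter> L') ` \<K> = Pow L'"
    using L unfolding L'_def by (intro card_subset_eq) auto
  with \<open>inj_on (\<lambda>X. X \<inter> L') \<K>\<close> show ?thesis
    unfolding bij_betw_def L'_def by simp
qed

locale HoPeS_setting =
  fixes C :: "'a set" and S :: "'a set set" and ent :: "'a set \<Rightarrow> real"
    and T :: "'a set set" and dth :: "'a set \<Rightarrow> real option"
  assumes filtration: "filtration C S ent"
    and MST: "is_MST C S ent T"
    and deaths: "valid_deaths S ent T dth"
begin

abbreviation Q :: "real \<Rightarrow> 'a set set" where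
  "Q \<equiv> Qf S ent"

abbreviation dying :: "real \<Rightarrow> 'a set set" where
  "dying t \<equiv> {e\<in>cand S T. dth e = Some t}"

abbreviation skel :: "real \<Rightarrow> 'a set set" where
  "skel \<equiv> HoPeS_at S ent T dth"

lemma finite_S: "finite S"
  using filtration by (rule filtration_finite)

lemma spanning_tree_T: "spanning_tree C S T"
  using filtration MST by (rule MST_spanning_tree)

lemma T_edges: "T \<subseteq> edges_of S"
  using spanning_tree_T by (rule spanning_tree_edges)

lemma finite_edges_of_S: "finite (edges_of S)"
  using finite_S unfolding edges_of_def by simp

lemma finite_T: "finite T"
  using filtration MST by (rule MST_spanning_tree)

lemma finite_cand: "finite (cand S T)"
  using finite_edges_of_S unfolding cand_def by simp

lemma finite_Q: "finite (Q \<alpha>)"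
  using finite_S unfolding Qf_def by simp

lemma edges_of_Q: "edges_of (Q \<alpha>) = {\<sigma>\<in>edges_of S. ent \<sigma> \<le> \<alpha>}"
  unfolding edges_of_def Qf_def by auto

lemma Q_subset_C: "\<forall>\<sigma>\<in>Q \<alpha>. \<sigma> \<subseteq> C"
  using filtration_simplex_subset[OF filtration] unfolding Qf_def by blast

lemma tris_of_Q_mono: "t \<le> \<alpha> \<Longrightarrow> tris_of (Q t) \<subseteq> tris_of (Q \<alpha>)"
  unfolding tris_of_def Qf_def by auto

lemma MST_at_subset: "MST_at ent T \<beta> \<subseteq> T"
  unfolding MST_at_def by blast

lemma dying_unassigned: "dying t \<subseteq> unassigned S ent T dth t"
  and leading_dying: "leading S ent T dth t (dying t)"
  and sum_leading_le: "leading S ent T dth t L \<Longrightarrow> (\<Sum>e\<in>L. ent e) \<le> (\<Sum>e\<in>dying t. ent e)"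
  using deaths unfolding valid_deaths_def Let_def by blast+

lemma unassigned_subset_cand: "unassigned S ent T dth t \<subseteq> cand S T"
  unfolding unassigned_def by blast

lemma empty_in_kerf: "{} \<in> kerf S ent T dth t"
  unfolding kerf_def by (intro CollectI conjI exI[of _ "{}"]) auto

lemma kerf_sym_diff:
  assumes "A \<in> kerf S ent T dth t" "A' \<in> kerf S ent T dth t"
  shows "sym_diff A A' \<in> kerf S ent T dth t"
proof -
  obtain d where d: "d \<subseteq> tris_of (Q t)" "sym_diff A (bd d) \<subseteq> MST_at ent T t"
    using assms(1) unfolding kerf_def by blast
  obtain d' where d': "d' \<subseteq> tris_of (Q t)" "sym_diff A' (bd d') \<subseteq> MST_at ent T t"
    using assms(2) unfolding kerf_def by blast
  have "finite (tris_of (Q t))"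
    using finite_Q unfolding tris_of_def by simp
  then have "bd (sym_diff d d') = sym_diff (bd d) (bd d')"
    using d(1) d'(1) finite_subset by (intro bd_sym_diff) blast+
  then have "sym_diff (sym_diff A A') (bd (sym_diff d d')) =
      sym_diff (sym_diff A (bd d)) (sym_diff A' (bd d'))"
    by auto
  then have "sym_diff (sym_diff A A') (bd (sym_diff d d')) \<subseteq> MST_at ent T t"
    using d(2) d'(2) by auto
  moreover have "sym_diff d d' \<subseteq> tris_of (Q t)"
    using d(1) d'(1) by auto
  moreover have "sym_diff A A' \<subseteq> unassigned S ent T dth t"
    using assms unfolding kerf_def by auto
  ultimately show ?thesis
    unfolding kerf_def by blast
qed

text \<open>The elder rule: a combination that dies together with the single leading edge e
  contains no edge younger than e, for swapping e for such an edge would give a leading set of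
  larger total birth.\<close>
lemma elder_rule:
  assumes e: "e \<in> dying t" and A: "A \<in> kerf S ent T dth t" "A \<inter> dying t = {e}"
    and f: "f \<in> A"
  shows "ent f \<le> ent e"
proof (rule ccontr)
  assume younger: "\<not> ent f \<le> ent e"
  then have "f \<notin> dying t"
    using f A(2) by auto
  have fin: "finite (dying t)"
    using finite_cand by simp
  have "bij_betw (\<lambda>X. X \<inter> insert f (dying t - {e})) (kerf S ent T dth t)
      (Pow (insert f (dying t - {e})))"
    using leading_dying \<open>f \<notin> dying t\<close> kerf_sym_diff A f
    by (intro bij_betw_Int_exchange[OF fin empty_in_kerf]) (auto simp: leading_def)
  moreover have "insert f (dying t - {e}) \<subseteq> unassigned S ent T dth t"
    using dying_unassigned A(1) f unfolding kerf_def by auto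
  ultimately have "(\<Sum>x\<in>insert f (dying t - {e}). ent x) \<le> (\<Sum>x\<in>dying t. ent x)"
    by (intro sum_leading_le) (simp add: leading_def)
  moreover have "(\<Sum>x\<in>insert f (dying t - {e}). ent x) = ent f + (\<Sum>x\<in>dying t - {e}. ent x)"
    using fin \<open>f \<notin> dying t\<close> by (intro sum.insert) auto
  moreover have "(\<Sum>x\<in>dying t - {e}. ent x) = (\<Sum>x\<in>dying t. ent x) - ent e"
    using fin e by (simp add: sum_diff1)
  ultimately show False
    using younger by simp
qed

section \<open>The reduced skeleton is a minimum-weight basis\<close>

lemma mem_skel_iff:
  "e \<in> skel \<alpha> \<longleftrightarrow> ent e \<le> \<alpha> \<and> (e \<in> T \<or> e \<in> cand S T \<and> (\<forall>t. dth e = Some t \<longrightarrow> \<alpha> < t))"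
proof (cases "e \<in> cand S T")
  case True
  then have "e \<notin> T"
    unfolding cand_def by blast
  then show ?thesis
    using True unfolding HoPeS_at_def HoPeS_def critical_def by force
next
  case False
  then show ?thesis
    unfolding HoPeS_at_def HoPeS_def critical_def by auto
qed

lemma skel_edges: "skel \<alpha> \<subseteq> edges_of (Q \<alpha>)"
  using mem_skel_iff T_edges unfolding edges_of_Q cand_def by blast

lemma finite_skel: "finite (skel \<alpha>)"
  using skel_edges finite_Q finite_subset unfolding edges_of_def by fastforce

lemma MST_at_subset_skel: "MST_at ent T \<alpha> \<subseteq> skel \<alpha>"
  using mem_skel_iff unfolding MST_at_def by blast

lemma chain_in_MST_at:
  assumes "finite A" "A \<subseteq> edges_of S" "\<forall>f\<in>A. ent f \<le> \<beta>"
  shows "\<exists>P\<subseteq>MST_at ent T \<beta>. finite P \<and> bd P = bd A"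
  using assms
proof (induction A rule: finite_induct)
  case empty
  show ?case by (intro exI[of _ "{}"]) simp
next
  case (insert f A)
  then obtain P where P: "P \<subseteq> MST_at ent T \<beta>" "finite P" "bd P = bd A"
    by auto
  have f: "f \<in> edges_of S" "ent f \<le> \<beta>"
    using insert.prems by auto
  then obtain x y where xy: "f = {x, y}" "x \<noteq> y"
    using edges_of_card by (meson card_2_iff)
  then have "conn (MST_at ent T \<beta>) x y"
    using MST_at_conn[OF filtration MST] f by simp
  moreover have "\<forall>\<sigma>\<in>MST_at ent T \<beta>. card \<sigma> = 2"
    using MST_at_subset T_edges edges_of_card by blast
  ultimately obtain p where p: "p \<subseteq> MST_at ent T \<beta>" "finite p" "bd p = ends x y"
    using conn_imp_chain by meson
  have "bd (sym_diff P p) = sym_diff (bd P) (bd p)"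
    using P(2) p(2) by (rule bd_sym_diff)
  also have "\<dots> = sym_diff (bd {f}) (bd A)"
    using P(3) p(3) xy by (auto simp: ends_def bd_edge)
  also have "\<dots> = bd (insert f A)"
    using insert.hyps by (rule bd_insert[symmetric])
  finally show ?case
    using P p by (intro exI[of _ "sym_diff P p"]) auto
qed

definition skel_upto :: "real \<Rightarrow> real \<Rightarrow> 'a set set" where
  "skel_upto \<alpha> s = {b\<in>skel \<alpha>. ent b \<le> s}"

lemma skel_upto_mono: "s \<le> s' \<Longrightarrow> skel_upto \<alpha> s \<subseteq> skel_upto \<alpha> s'"
  unfolding skel_upto_def by auto

lemma kerf_leading_singleton:
  assumes "e \<in> dying t"
  obtains A where "A \<in> kerf S ent T dth t" "A \<inter> dying t = {e}"
proof -
  have "{e} \<in> (\<lambda>A. A \<inter> dying t) ` kerf S ent T dth t"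
    using leading_dying assms unfolding leading_def bij_betw_def by auto
  then show ?thesis
    using that by auto
qed

text \<open>A kernel element at scale t made of edges of length at most 2s is, modulo boundaries, the
  unique path in the MST with the same endpoints, and that path consists of edges of length at
  most 2s by the cycle property.\<close>
lemma kerf_in_hspan_skel_upto:
  assumes A: "A \<in> kerf S ent T dth t" "\<forall>f\<in>A. ent f \<le> s" and "t \<le> \<alpha>" "s \<le> \<alpha>"
  shows "A \<in> hspan (Q \<alpha>) (skel_upto \<alpha> s)"
proof -
  have A_un: "A \<subseteq> unassigned S ent T dth t"
    and "\<exists>d. d \<subseteq> tris_of (Q t) \<and> sym_diff A (bd d) \<subseteq> MST_at ent T t"
    using A(1) by (simp_all only: kerf_def mem_Collect_eq)
  then obtain d where d: "d \<subseteq> tris_of (Q t)" "sym_diff A (bd d) \<subseteq> MST_at ent T t"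
    by blast
  define m where "m = sym_diff A (bd d)"
  have "A \<subseteq> edges_of S"
    using A_un unassigned_subset_cand unfolding cand_def by blast
  moreover have "finite A"
    using calculation finite_edges_of_S by (rule finite_subset)
  ultimately obtain P where P: "P \<subseteq> MST_at ent T s" "bd P = bd A"
    using chain_in_MST_at A(2) by meson
  have "bd m = sym_diff (bd A) (bd (bd d))"
    unfolding m_def using \<open>finite A\<close> finite_bd_tris[OF finite_Q d(1)] by (rule bd_sym_diff)
  then have "bd m = bd P"
    using bd_bd_tris[OF finite_Q d(1)] P(2) by simp
  moreover have "m \<subseteq> T" "P \<subseteq> T"
    using d(2) P(1) MST_at_subset unfolding m_def by blast+
  ultimately have "m = P"
    using spanning_tree_chain_unique[OF spanning_tree_T finite_T] by blast
  then have m_short: "m \<subseteq> skel_upto \<alpha> s"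
    using P(1) \<open>s \<le> \<alpha>\<close> mem_skel_iff unfolding MST_at_def skel_upto_def by auto
  have "sym_diff A m = bd d"
    unfolding m_def by auto
  then have "sym_diff A m \<in> boundaries (Q \<alpha>)"
    using d(1) tris_of_Q_mono[OF \<open>t \<le> \<alpha>\<close>] unfolding boundaries_def by blast
  with m_short show ?thesis
    unfolding hspan_def by blast
qed

definition later_deaths :: "real \<Rightarrow> real \<Rightarrow> nat" where
  "later_deaths \<alpha> t = card {f\<in>cand S T. \<exists>t'. dth f = Some t' \<and> t < t' \<and> t' \<le> \<alpha>}"

lemma later_deaths_less:
  assumes "f \<in> cand S T" "dth f = Some t'" "t < t'" "t' \<le> \<alpha>"
  shows "later_deaths \<alpha> t' < later_deaths \<alpha> t"
  unfolding later_deaths_def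
proof (rule psubset_card_mono)
  show "finite {f\<in>cand S T. \<exists>t''. dth f = Some t'' \<and> t < t'' \<and> t'' \<le> \<alpha>}"
    using finite_cand by simp
  show "{f\<in>cand S T. \<exists>t''. dth f = Some t'' \<and> t' < t'' \<and> t'' \<le> \<alpha>}
      \<subset> {f\<in>cand S T. \<exists>t''. dth f = Some t'' \<and> t < t'' \<and> t'' \<le> \<alpha>}"
    using assms by force
qed

lemma unassigned_alive_or_dies_later:
  assumes "f \<in> unassigned S ent T dth t" "f \<notin> dying t" "t \<le> \<alpha>"
  shows "f \<in> skel_upto \<alpha> (ent f) \<or> (\<exists>t'. dth f = Some t' \<and> t < t' \<and> t' \<le> \<alpha>)"
proof (cases "\<exists>t'. dth f = Some t' \<and> t' \<le> \<alpha>")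
  case True
  then obtain t' where "dth f = Some t'" "t' \<le> \<alpha>"
    by blast
  moreover have "t < t'"
    using assms(1,2) calculation(1) unfolding unassigned_def by force
  ultimately show ?thesis
    by blast
next
  case False
  then show ?thesis
    using assms mem_skel_iff unfolding unassigned_def skel_upto_def by force
qed

lemma dead_edge_in_hspan:
  assumes "e \<in> cand S T" "dth e = Some t" "t \<le> \<alpha>"
  shows "{e} \<in> hspan (Q \<alpha>) (skel_upto \<alpha> (ent e))"
  using assms
proof (induction "later_deaths \<alpha> t" arbitrary: e t rule: less_induct)
  case less
  then have e: "e \<in> dying t"
    by simp
  obtain A where A: "A \<in> kerf S ent T dth t" "A \<inter> dying t = {e}"
    using kerf_leading_singleton[OF e] by blast
  have A_un: "A \<subseteq> unassigned S ent T dth t"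
    using A(1) unfolding kerf_def by blast
  have "ent e \<le> t"
    using A_un A(2) unfolding unassigned_def by auto
  have A_span: "A \<in> hspan (Q \<alpha>) (skel_upto \<alpha> (ent e))"
    using A elder_rule[OF e A] \<open>ent e \<le> t\<close> less.prems(3)
    by (intro kerf_in_hspan_skel_upto) auto
  have "{f} \<in> hspan (Q \<alpha>) (skel_upto \<alpha> (ent e))" if f: "f \<in> A - {e}" for f
  proof -
    have "f \<notin> dying t" "ent f \<le> ent e"
      using f A elder_rule[OF e A] by auto
    then consider "f \<in> skel_upto \<alpha> (ent f)" | t' where "dth f = Some t'" "t < t'" "t' \<le> \<alpha>"
      using unassigned_alive_or_dies_later f A_un less.prems(3) by blast
    then show ?thesis
    proof cases
      case 1
      then show ?thesis
        using skel_upto_mono[OF \<open>ent f \<le> ent e\<close>] by (intro subset_hspan) auto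
    next
      case (2 t')
      then have "{f} \<in> hspan (Q \<alpha>) (skel_upto \<alpha> (ent f))"
        using less.hyps later_deaths_less f A_un unassigned_subset_cand by blast
      then show ?thesis
        using hspan_mono skel_upto_mono[OF \<open>ent f \<le> ent e\<close>] by blast
    qed
  qed
  moreover have "finite A"
    using A_un unassigned_subset_cand finite_cand by (meson finite_subset)
  ultimately have "A - {e} \<in> hspan (Q \<alpha>) (skel_upto \<alpha> (ent e))"
    by (intro hspan_if_singletons[OF finite_Q]) auto
  then have "sym_diff A (A - {e}) \<in> hspan (Q \<alpha>) (skel_upto \<alpha> (ent e))"
    using A_span by (intro hspan_sym_diff[OF finite_Q])
  moreover have "sym_diff A (A - {e}) = {e}"
    using A(2) by auto
  ultimately show ?case
    by (simp only:)
qed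

lemma edge_in_hspan_skel_upto:
  assumes "e \<in> edges_of (Q \<alpha>)"
  shows "{e} \<in> hspan (Q \<alpha>) (skel_upto \<alpha> (ent e))"
proof (cases "e \<in> skel \<alpha>")
  case True
  then show ?thesis
    unfolding skel_upto_def by (intro subset_hspan) simp
next
  case False
  have e: "e \<in> edges_of S" "ent e \<le> \<alpha>"
    using assms unfolding edges_of_Q by auto
  then have "e \<in> cand S T"
    using False mem_skel_iff unfolding cand_def by blast
  then obtain t where "dth e = Some t" "t \<le> \<alpha>"
    using False e(2) mem_skel_iff by force
  with \<open>e \<in> cand S T\<close> show ?thesis
    by (rule dead_edge_in_hspan)
qed

text \<open>A boundary made of skeleton edges has its non-MST part in ker f at scale alpha; that part
  has no leading edge (none of its edges dies at alpha), so it vanishes, and a cycle in the MST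
  is empty.\<close>
lemma hindep_skel: "hindep (Q \<alpha>) (skel \<alpha>)"
  unfolding hindep_def
proof (intro allI impI)
  fix Y assume Y: "Y \<subseteq> skel \<alpha>" "Y \<in> boundaries (Q \<alpha>)"
  then obtain d where d: "Y = bd d" "d \<subseteq> tris_of (Q \<alpha>)"
    unfolding boundaries_def by blast
  define Z where "Z = Y \<inter> cand S T"
  have Z_alive: "ent f \<le> \<alpha> \<and> (\<forall>t. dth f = Some t \<longrightarrow> \<alpha> < t)" if "f \<in> Z" for f
  proof -
    have "f \<in> skel \<alpha>" "f \<notin> T"
      using that Y(1) unfolding Z_def cand_def by auto
    then show ?thesis
      using mem_skel_iff by blast
  qed
  then have "Z \<subseteq> unassigned S ent T dth \<alpha>"
    unfolding Z_def unassigned_def by (auto intro: less_imp_le)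
  moreover have "Y - cand S T \<subseteq> MST_at ent T \<alpha>"
    using Y(1) mem_skel_iff unfolding MST_at_def by blast
  then have "sym_diff Z (bd d) \<subseteq> MST_at ent T \<alpha>"
    unfolding Z_def d(1)[symmetric] by auto
  ultimately have "Z \<in> kerf S ent T dth \<alpha>"
    using d(2) unfolding kerf_def by blast
  moreover have "Z \<inter> dying \<alpha> = {} \<inter> dying \<alpha>"
    using Z_alive by fastforce
  moreover have "inj_on (\<lambda>A. A \<inter> dying \<alpha>) (kerf S ent T dth \<alpha>)"
    using leading_dying unfolding leading_def by (auto dest: bij_betw_imp_inj_on)
  ultimately have "Z = {}"
    using empty_in_kerf by (auto dest: inj_onD)
  then have "Y \<subseteq> T"
    using Y(1) mem_skel_iff unfolding Z_def by blast
  moreover have "bd Y = {}"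
    unfolding d(1) using finite_Q d(2) by (rule bd_bd_tris)
  ultimately show "Y = {}"
    using spanning_tree_cycle_free[OF spanning_tree_T finite_T] unfolding cycle_free_def by blast
qed

lemma spans_skel: "spans C (skel \<alpha>) (Q \<alpha>)"
  unfolding spans_def
proof (intro conjI ballI impI)
  show "skel \<alpha> \<subseteq> edges_of (Q \<alpha>)"
    by (rule skel_edges)
  fix u v assume "conn (edges_of (Q \<alpha>)) u v"
  then show "conn (skel \<alpha>) u v"
  proof (rule conn_transfer[rotated])
    fix x y assume "{x, y} \<in> edges_of (Q \<alpha>)"
    then have "conn (MST_at ent T \<alpha>) x y"
      using MST_at_conn[OF filtration MST] unfolding edges_of_Q by blast
    then show "conn (skel \<alpha>) x y"
      using MST_at_subset_skel by (rule conn_mono[rotated])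
  qed
qed

lemma skel_in_hspan: "e \<in> edges_of (Q \<alpha>) \<Longrightarrow> {e} \<in> hspan (Q \<alpha>) (skel \<alpha>)"
  using hspan_mono[OF _ edge_in_hspan_skel_upto] unfolding skel_upto_def by blast

lemma H1_iso_skel: "H1_iso (skel \<alpha>) (Q \<alpha>)"
  using skel_in_hspan by (intro H1_iso_if_hindep_hspan[OF finite_Q skel_edges hindep_skel]) blast

lemma total_len_skel_le:
  assumes G: "spans C G (Q \<alpha>)" "H1_iso G (Q \<alpha>)"
  shows "total_len ent (skel \<alpha>) \<le> total_len ent G"
proof -
  have G_edges: "G \<subseteq> edges_of (Q \<alpha>)"
    using G(1) unfolding spans_def by simp
  have "sum ent (skel \<alpha>) \<le> sum ent G"
  proof (rule greedy_basis_sum_le[OF finite_Q finite_skel _ hindep_skel])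
    show "finite G"
      using G_edges finite_Q finite_subset unfolding edges_of_def by fastforce
    show "hindep (Q \<alpha>) G"
      using finite_Q G(2) by (rule hindep_if_H1_iso)
    show "\<forall>b\<in>skel \<alpha>. {b} \<in> hspan (Q \<alpha>) G"
      using skel_edges edge_in_hspan_if_H1_iso[OF finite_Q Q_subset_C G] by blast
    show "\<forall>g\<in>G. {g} \<in> hspan (Q \<alpha>) {b\<in>skel \<alpha>. ent b \<le> ent g}"
      using G_edges edge_in_hspan_skel_upto unfolding skel_upto_def by blast
    show "\<forall>x\<in>skel \<alpha> \<union> G. 0 \<le> ent x"
      using skel_edges G_edges filtration_ent_pos[OF filtration] unfolding edges_of_Q
      by (fastforce intro: less_imp_le)
  qed
  then show ?thesis
    unfolding total_len_def by (simp add: sum_distrib_left[symmetric])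
qed

end

theorem mainTheorem9:
  fixes C :: "'a::metric_space set"
    and S :: "'a set set"
    and ent :: "'a set \<Rightarrow> real"
    and T :: "'a set set"
    and dth :: "'a set \<Rightarrow> real option"
    and \<alpha> :: real
  assumes "filtration C S ent"
    and "is_MST C S ent T"
    and "valid_deaths S ent T dth"
    and "\<alpha> > 0"
  shows "spans C (HoPeS_at S ent T dth \<alpha>) (Qf S ent \<alpha>) \<and>
         H1_iso (HoPeS_at S ent T dth \<alpha>) (Qf S ent \<alpha>) \<and>
         (\<forall>G. spans C G (Qf S ent \<alpha>) \<and> H1_iso G (Qf S ent \<alpha>) \<longrightarrow>
              total_len ent (HoPeS_at S ent T dth \<alpha>) \<le> total_len ent G)"
proof -
  interpret HoPeS_setting C S ent T dth
    using assms(1-3) by unfold_locales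
  show ?thesis
    using spans_skel H1_iso_skel total_len_skel_le by blast
qed

end
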